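(* Let $A\in\mathbb R^{d\times d}$ be symmetric with $\mathrm{Tr}(A)=0$, and let $k\ge1$ be an integer. Then $$A^{\tilde\otimes k}(I^{\otimes k-1})=\sum_{s=1}^k d_{k,s}\,A^s\cdot A^{\tilde\otimes k-s}(I^{\otimes(k-s)}),\qquad d_{k,s}:=2^{s-1}\frac{(2k-2s-1)!!\,(k-1)!}{(2k-1)!!\,(k-s)!},$$ with the convention $(-1)!!=1$.
   Context: For a $k$-tensor $T\in(\mathbb R^d)^{\otimes k}$, $\mathrm{Sym}(T)_{i_1\dots i_k}=\frac1{k!}\sum_{\pi\in S_k}T_{i_{\pi(1)}\dots i_{\pi(k)}}$. The symmetric tensor product is $A\tilde\otimes B=\mathrm{Sym}(A\otimes B)$, and $A^{\tilde\otimes k}=\mathrm{Sym}(A^{\otimes k})$, viewing the matrix $A$ as a 2-tensor (so $A^{\tilde\otimes k}$ is a symmetric $2k$-tensor). For a symmetric $k$-tensor $T$ and an $a$-tensor $M$ with $a\le k$, the contraction $T(M)$ is the $(k-a)$-tensor $T(M)_{i_1\dots i_{k-a}}=\sum_{j_1,\dots,j_a}T_{j_1\dots j_a i_1\dots i_{k-a}}M_{j_1\dots j_a}$. Thus $A^{\tilde\otimes k}(I^{\otimes k-1})$ is a $d\times d$ matrix, $A^{\tilde\otimes k-s}(I^{\otimes(k-s)})$ is a scalar (equal to $1$ when $s=k$), and $A^s$ is the matrix power. *)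

theory Defs
  imports "HOL-Analysis.Analysis"
begin

text \<open>Tensors over R^d (d = CARD('n)) are represented as functions from index
  lists to reals; a k-tensor is only ever evaluated on index lists of length k.\<close>

type_synonym 'n tensor = "'n list \<Rightarrow> real"

primrec matpow :: "real^'n^'n \<Rightarrow> nat \<Rightarrow> real^'n^'n" where
  "matpow A 0 = mat 1"
| "matpow A (Suc n) = A ** matpow A n"

definition mat_tpow :: "real^'n^'n \<Rightarrow> nat \<Rightarrow> 'n tensor" where
  "mat_tpow A k = (\<lambda>is. \<Prod>j<k. A $ (is ! (2*j)) $ (is ! (2*j+1)))"

definition Sym :: "nat \<Rightarrow> 'n tensor \<Rightarrow> 'n tensor" where
  "Sym k T = (\<lambda>is. (1 / fact k) *
     (\<Sum>\<pi>\<in>{\<pi>. \<pi> permutes {..<k}}. T (map (\<lambda>j. is ! \<pi> j) [0..<k])))"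

definition sym_tpow :: "real^'n^'n \<Rightarrow> nat \<Rightarrow> 'n tensor" where
  "sym_tpow A k = Sym (2*k) (mat_tpow A k)"

definition contract :: "nat \<Rightarrow> 'n tensor \<Rightarrow> 'n tensor \<Rightarrow> 'n tensor" where
  "contract a T M = (\<lambda>is. \<Sum>js\<in>{js :: 'n list. length js = a}. T (js @ is) * M js)"

definition dfact :: "int \<Rightarrow> real" where
  "dfact n = (if n \<le> 0 then 1 else (\<Prod>i\<in>{0..<nat ((n+1) div 2)}. real_of_int (n - 2*int i)))"

definition dcoef :: "nat \<Rightarrow> nat \<Rightarrow> real" where
  "dcoef k s = 2^(s-1) * dfact (2*int k - 2*int s - 1) * fact (k-1)
               / (dfact (2*int k - 1) * fact (k-s))"

end

(*
  Write w a b = A $ a $ b. For an index list l of length 2n, (2n)! * Sym(A^{\<otimes>n}) l is the sum,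
  over all orderings of the positions of l, of the product of w over consecutive pairs of positions.
  Since w is symmetric, this sum can be expanded at any fixed position e: it is the number of
  positions times the sum, over the partner p of e, of w (l!p) (l!e) times the same sum over the
  remaining positions.

  Contracting with I^{\<otimes>(k-1)} turns the index list into x1 x1 ... x(k-1) x(k-1) i j, summed over
  the x's. Expanding at the slot j, its partner is either i, contributing A_ij times the scalar
  contraction of order k - 1, or one of the 2(k-1) repeated slots, which after summation leaves the
  matrix of order k - 1 multiplied by A. With M_k = A^{~\<otimes>k}(I^{\<otimes>(k-1)}) and c_m = A^{~\<otimes>m}(I^{\<otimes>m}):
      (2k - 1) M_k = c_(k-1) A + 2(k - 1) M_(k-1) A,
  and d_(k,s) is exactly the solution of this recursion.
*)

theory Submission
  imports Defs "HOL-Combinatorics.Multiset_Permutations" "HOL-Combinatorics.List_Permutation"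
begin

lemma sum_distinct_pairs_remove:
  assumes "finite S" "e \<in> S"
  shows "(\<Sum>p\<in>S. \<Sum>q\<in>S - {p}. f p q) =
    (\<Sum>q\<in>S - {e}. f e q) + (\<Sum>p\<in>S - {e}. f p e) + (\<Sum>p\<in>S - {e}. \<Sum>q\<in>S - {e} - {p}. f p q)"
proof -
  have "(\<Sum>q\<in>S - {p}. f p q) = f p e + (\<Sum>q\<in>S - {e} - {p}. f p q)" if "p \<in> S - {e}" for p
  proof -
    have "S - {p} = insert e (S - {e} - {p})" using that assms(2) by auto
    then show ?thesis using assms(1) by (simp add: sum.insert)
  qed
  then show ?thesis
    using assms by (simp add: sum.remove[of S e] sum.distrib add.assoc)
qed

lemma sum_distinct_pairs_swap:
  assumes "finite V"
  shows "(\<Sum>q\<in>V. \<Sum>r\<in>V - {q}. g q r) = (\<Sum>r\<in>V. \<Sum>q\<in>V - {r}. g q r)"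
proof -
  have "{r. r \<in> V \<and> q \<noteq> r} = V - {q}" "{q. q \<in> V \<and> q \<noteq> r} = V - {r}" for q r
    by auto
  with sum.swap_restrict[OF assms assms, of g "(\<noteq>)"] show ?thesis
    by simp
qed

lemma sum_distinct_triples_rotate:
  assumes "finite U"
  shows "(\<Sum>p\<in>U. \<Sum>q\<in>U - {p}. \<Sum>r\<in>U - {p} - {q}. f p q r) =
         (\<Sum>r\<in>U. \<Sum>p\<in>U - {r}. \<Sum>q\<in>U - {r} - {p}. f p q r)"
proof -
  have "(\<Sum>p\<in>U. \<Sum>q\<in>U - {p}. \<Sum>r\<in>U - {p} - {q}. f p q r) =
        (\<Sum>p\<in>U. \<Sum>r\<in>U - {p}. \<Sum>q\<in>U - {p} - {r}. f p q r)"
    using assms by (intro sum.cong refl sum_distinct_pairs_swap) simp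
  also have "\<dots> = (\<Sum>r\<in>U. \<Sum>p\<in>U - {r}. \<Sum>q\<in>U - {p} - {r}. f p q r)"
    using assms by (rule sum_distinct_pairs_swap)
  also have "\<dots> = (\<Sum>r\<in>U. \<Sum>p\<in>U - {r}. \<Sum>q\<in>U - {r} - {p}. f p q r)"
    by (simp only: Diff_insert[symmetric] insert_commute)
  finally show ?thesis .
qed

lemma sum_lessThan_even_odd:
  "(\<Sum>p<2 * (m::nat). f p :: 'a::comm_monoid_add) = (\<Sum>t<m. f (2 * t) + f (2 * t + 1))"
  by (induction m) (simp_all add: add_ac)

lemma sum_permutations_of_set_Cons:
  assumes "finite S" "S \<noteq> {}"
  shows "(\<Sum>ps\<in>permutations_of_set S. f ps) = (\<Sum>p\<in>S. \<Sum>ps\<in>permutations_of_set (S - {p}). f (p # ps))"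
proof -
  have "(\<Sum>ps\<in>permutations_of_set S. f ps) = (\<Sum>p\<in>S. \<Sum>ps\<in>(#) p ` permutations_of_set (S - {p}). f ps)"
    unfolding permutations_of_set_nonempty[OF assms(2)]
    by (rule sum.UNION_disjoint) (use assms in auto)
  also have "\<dots> = (\<Sum>p\<in>S. \<Sum>ps\<in>permutations_of_set (S - {p}). f (p # ps))"
    by (rule sum.cong[OF refl], subst sum.reindex) auto
  finally show ?thesis .
qed

lemma sum_permutes_eq_sum_permutations_of_set:
  "(\<Sum>\<pi>\<in>{\<pi>. \<pi> permutes {..<n}}. f (map \<pi> [0..<n])) = (\<Sum>ps\<in>permutations_of_set {..<n}. f ps)"
proof (rule sum.reindex_bij_witness[where i = "\<lambda>ps i. if i < n then ps ! i else i"
      and j = "\<lambda>\<pi>. map \<pi> [0..<n]"])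
  fix \<pi> assume "\<pi> \<in> {\<pi>. \<pi> permutes {..<n}}"
  then have \<pi>: "\<pi> permutes {..<n}" by simp
  show "(\<lambda>i. if i < n then map \<pi> [0..<n] ! i else i) = \<pi>"
    using \<pi> by (auto simp: fun_eq_iff permutes_not_in)
  show "map \<pi> [0..<n] \<in> permutations_of_set {..<n}"
  proof
    show "set (map \<pi> [0..<n]) = {..<n}"
      using permutes_image[OF \<pi>] by (simp add: atLeast0LessThan)
    show "distinct (map \<pi> [0..<n])"
      using permutes_inj_on[OF \<pi>] by (simp add: distinct_map atLeast0LessThan inj_on_subset)
  qed
next
  fix ps assume "ps \<in> permutations_of_set {..<n}"
  then have set_ps: "set ps = {..<n}" and "distinct ps" by (auto dest: permutations_of_setD)
  then have len: "length ps = n" using distinct_card by fastforce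
  show "map (\<lambda>i. if i < n then ps ! i else i) [0..<n] = ps"
    using len by (simp add: list_eq_iff_nth_eq)
  have "bij_betw (nth ps) {..<n} {..<n}"
    using \<open>distinct ps\<close> len set_ps by (metis bij_betw_nth lessThan_atLeast0)
  then have "bij_betw (\<lambda>i. if i < n then ps ! i else i) {..<n} {..<n}"
    by (rule bij_betw_cong[THEN iffD1, rotated]) simp
  then show "(\<lambda>i. if i < n then ps ! i else i) \<in> {\<pi>. \<pi> permutes {..<n}}"
    by (auto intro!: bij_imp_permutes split: if_splits)
qed auto

lemma sum_lists_length_Suc:
  "(\<Sum>xs\<in>{xs :: 'a::finite list. length xs = Suc n}. f xs) =
   (\<Sum>x\<in>UNIV. \<Sum>xs\<in>{xs. length xs = n}. f (x # xs))"
proof -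
  have "(\<Sum>x\<in>UNIV. \<Sum>xs\<in>{xs. length xs = n}. f (x # xs)) =
        (\<Sum>(x, xs)\<in>UNIV \<times> {xs. length xs = n}. f (x # xs))"
    by (rule sum.cartesian_product)
  also have "\<dots> = (\<Sum>xs\<in>{xs :: 'a list. length xs = Suc n}. f xs)"
    by (rule sum.reindex_bij_witness[where j = "\<lambda>(x, xs). x # xs" and i = "\<lambda>xs. (hd xs, tl xs)"])
       (auto simp: length_Suc_conv)
  finally show ?thesis ..
qed

lemma sum_lists_remove_nth:
  assumes "t < m"
  shows "(\<Sum>xs\<in>{xs :: 'a::finite list. length xs = m}. f (xs ! t) (take t xs @ drop (Suc t) xs)) =
         (\<Sum>x\<in>UNIV. \<Sum>ys\<in>{ys. length ys = m - 1}. f x ys)"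
proof -
  have "(\<Sum>x\<in>UNIV. \<Sum>ys\<in>{ys. length ys = m - 1}. f x ys) =
        (\<Sum>(x, ys)\<in>UNIV \<times> {ys. length ys = m - 1}. f x ys)"
    by (rule sum.cartesian_product)
  also have "\<dots> = (\<Sum>xs\<in>{xs :: 'a list. length xs = m}. f (xs ! t) (take t xs @ drop (Suc t) xs))"
    using assms
    by (intro sum.reindex_bij_witness[where j = "\<lambda>(x, ys). take t ys @ x # drop t ys"
          and i = "\<lambda>xs. (xs ! t, take t xs @ drop (Suc t) xs)"])
       (auto simp: nth_append min_def id_take_nth_drop[symmetric])
  finally show ?thesis ..
qed

fun pair_prod :: "('a \<Rightarrow> 'a \<Rightarrow> 'b::comm_semiring_1) \<Rightarrow> 'a list \<Rightarrow> 'b" where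
  "pair_prod w [] = 1"
| "pair_prod w [a] = 0"
| "pair_prod w (a # b # r) = w a b * pair_prod w r"

definition perm_pair_sum :: "('a \<Rightarrow> 'a \<Rightarrow> 'b::comm_semiring_1) \<Rightarrow> 'a set \<Rightarrow> 'b" where
  "perm_pair_sum w S = (\<Sum>ps\<in>permutations_of_set S. pair_prod w ps)"

lemma pair_prod_map: "pair_prod w (map f ps) = pair_prod (\<lambda>p q. w (f p) (f q)) ps"
  by (induction "\<lambda>p q. w (f p) (f q)" ps rule: pair_prod.induct) simp_all

lemma pair_prod_cong:
  "set ps \<subseteq> S \<Longrightarrow> (\<And>p q. p \<in> S \<Longrightarrow> q \<in> S \<Longrightarrow> w p q = w' p q) \<Longrightarrow> pair_prod w ps = pair_prod w' ps"
  by (induction w ps rule: pair_prod.induct) simp_all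

lemma perm_pair_sum_singleton [simp]: "perm_pair_sum w {e} = 0"
  by (simp add: perm_pair_sum_def)

lemma perm_pair_sum_cong:
  "(\<And>p q. p \<in> S \<Longrightarrow> q \<in> S \<Longrightarrow> w p q = w' p q) \<Longrightarrow> perm_pair_sum w S = perm_pair_sum w' S"
  unfolding perm_pair_sum_def
  by (intro sum.cong refl pair_prod_cong[of _ S]) (auto dest: permutations_of_setD)

lemma perm_pair_sum_reindex:
  assumes "inj_on f S"
  shows "perm_pair_sum w (f ` S) = perm_pair_sum (\<lambda>p q. w (f p) (f q)) S"
proof -
  have "inj_on (map f) (permutations_of_set S)"
    using assms by (intro inj_onI) (auto simp: permutations_of_set_def inj_on_map_eq_map)
  then show ?thesis
    unfolding perm_pair_sum_def permutations_of_set_image_inj[OF assms]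
    by (simp add: sum.reindex pair_prod_map)
qed

lemma perm_pair_sum_rec:
  assumes "finite S" "S \<noteq> {}"
  shows "perm_pair_sum w S = (\<Sum>p\<in>S. \<Sum>q\<in>S - {p}. w p q * perm_pair_sum w (S - {p} - {q}))"
  unfolding perm_pair_sum_def
proof (subst sum_permutations_of_set_Cons[OF assms], intro sum.cong refl)
  fix p assume "p \<in> S"
  show "(\<Sum>ps\<in>permutations_of_set (S - {p}). pair_prod w (p # ps)) =
        (\<Sum>q\<in>S - {p}. w p q * (\<Sum>ps\<in>permutations_of_set (S - {p} - {q}). pair_prod w ps))"
  proof (cases "S - {p} = {}")
    case True
    then show ?thesis by (simp only: True) simp
  next
    case False
    then show ?thesis
      by (subst sum_permutations_of_set_Cons) (use assms in \<open>auto simp: sum_distrib_left\<close>)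
  qed
qed

(* The induction step of perm_pair_sum_expand_at: the triple sum over distinct p, q, r is re-summed
   around the partner r of e, and the inner double sum is perm_pair_sum_rec for S - {r} - {e}. *)
lemma perm_pair_sum_off_diagonal:
  fixes w :: "'a \<Rightarrow> 'a \<Rightarrow> 'b::comm_semiring_1" and S :: "'a set"
  defines "c \<equiv> of_nat (card S - 2) :: 'b"
  assumes "finite S" "e \<in> S"
    and IH: "\<And>p q. p \<in> S - {e} \<Longrightarrow> q \<in> S - {e} - {p} \<Longrightarrow> perm_pair_sum w (S - {p} - {q}) =
      c * (\<Sum>r\<in>S - {e} - {p} - {q}. w r e * perm_pair_sum w (S - {p} - {q} - {r} - {e}))"
  shows "(\<Sum>p\<in>S - {e}. \<Sum>q\<in>S - {e} - {p}. w p q * perm_pair_sum w (S - {p} - {q})) =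
    c * (\<Sum>r\<in>S - {e}. w r e * perm_pair_sum w (S - {r} - {e}))"
proof -
  define U where "U = S - {e}"
  have minus: "S - {p} - {q} - {r} - {e} = S - {r} - {e} - {p} - {q}" for p q r by blast
  have resum: "(\<Sum>p\<in>U - {r}. \<Sum>q\<in>U - {r} - {p}. w p q * perm_pair_sum w (S - {r} - {e} - {p} - {q}))
      = perm_pair_sum w (S - {r} - {e})" if "r \<in> U" "c \<noteq> 0" for r
  proof -
    have "U - {r} \<noteq> {}"
    proof
      assume "U - {r} = {}"
      then have "S = {e, r}" and "r \<noteq> e" using that assms(2,3) by (auto simp: U_def)
      then show False using \<open>c \<noteq> 0\<close> by (simp add: c_def)
    qed
    moreover have U_r: "U - {r} = S - {r} - {e}" by (auto simp: U_def)
    ultimately show ?thesis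
      unfolding U_r using assms(2) by (intro perm_pair_sum_rec[symmetric]) auto
  qed
  have "(\<Sum>p\<in>U. \<Sum>q\<in>U - {p}. w p q * perm_pair_sum w (S - {p} - {q})) =
      (\<Sum>p\<in>U. \<Sum>q\<in>U - {p}. \<Sum>r\<in>U - {p} - {q}.
         c * w r e * (w p q * perm_pair_sum w (S - {r} - {e} - {p} - {q})))"
    by (intro sum.cong refl) (simp add: U_def IH minus sum_distrib_left mult_ac)
  also have "\<dots> = (\<Sum>r\<in>U. \<Sum>p\<in>U - {r}. \<Sum>q\<in>U - {r} - {p}.
         c * w r e * (w p q * perm_pair_sum w (S - {r} - {e} - {p} - {q})))"
    using assms(2) by (intro sum_distinct_triples_rotate) (simp add: U_def)
  also have "\<dots> = (\<Sum>r\<in>U. c * (w r e * perm_pair_sum w (S - {r} - {e})))"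
  proof (intro sum.cong refl)
    fix r assume "r \<in> U"
    then show "(\<Sum>p\<in>U - {r}. \<Sum>q\<in>U - {r} - {p}.
         c * w r e * (w p q * perm_pair_sum w (S - {r} - {e} - {p} - {q}))) =
        c * (w r e * perm_pair_sum w (S - {r} - {e}))"
      using resum[of r] by (cases "c = 0") (simp_all add: sum_distrib_left[symmetric] mult.assoc)
  qed
  finally show ?thesis
    by (simp add: U_def sum_distrib_left)
qed

lemma perm_pair_sum_expand_at:
  fixes w :: "'a \<Rightarrow> 'a \<Rightarrow> 'b::comm_semiring_1"
  assumes sym: "\<And>p q. w p q = w q p" and "finite S" "e \<in> S"
  shows "perm_pair_sum w S = of_nat (card S) * (\<Sum>p\<in>S - {e}. w p e * perm_pair_sum w (S - {p} - {e}))"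
  using assms(2,3)
proof (induction "card S" arbitrary: S rule: less_induct)
  case less
  define B where "B = (\<Sum>p\<in>S - {e}. w p e * perm_pair_sum w (S - {p} - {e}))"
  show ?case
  proof (cases "S = {e}")
    case True
    then show ?thesis by simp
  next
    case False
    then obtain u where "u \<in> S" "u \<noteq> e" using less.prems by blast
    then have "card {e, u} \<le> card S" using less.prems by (intro card_mono) auto
    then obtain n where n: "card S = n + 2" using \<open>u \<noteq> e\<close> by (metis card_2_iff le_add_diff_inverse2)
    have IH: "perm_pair_sum w (S - {p} - {q}) = of_nat (card S - 2) *
        (\<Sum>r\<in>S - {e} - {p} - {q}. w r e * perm_pair_sum w (S - {p} - {q} - {r} - {e}))"
      if "p \<in> S - {e}" "q \<in> S - {e} - {p}" for p q
    proof -
      have "card (S - {p} - {q}) < card S"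
        using that less.prems by (intro psubset_card_mono) auto
      moreover have "card (S - {p} - {q}) = card S - 2" "S - {p} - {q} - {e} = S - {e} - {p} - {q}"
        using that less.prems by (auto simp: card_Diff_singleton_if)
      ultimately show ?thesis
        using less.hyps[of "S - {p} - {q}"] that less.prems by auto
    qed
    have "perm_pair_sum w S = (\<Sum>p\<in>S. \<Sum>q\<in>S - {p}. w p q * perm_pair_sum w (S - {p} - {q}))"
      using less.prems by (intro perm_pair_sum_rec) auto
    also have "\<dots> = (\<Sum>q\<in>S - {e}. w e q * perm_pair_sum w (S - {e} - {q})) + B +
        (\<Sum>p\<in>S - {e}. \<Sum>q\<in>S - {e} - {p}. w p q * perm_pair_sum w (S - {p} - {q}))"
      unfolding B_def using less.prems by (rule sum_distinct_pairs_remove)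
    also have "(\<Sum>q\<in>S - {e}. w e q * perm_pair_sum w (S - {e} - {q})) = B"
      unfolding B_def by (intro sum.cong refl) (simp add: sym Diff_insert[symmetric] insert_commute)
    also have "(\<Sum>p\<in>S - {e}. \<Sum>q\<in>S - {e} - {p}. w p q * perm_pair_sum w (S - {p} - {q})) =
        of_nat n * B"
      unfolding B_def using perm_pair_sum_off_diagonal[of S e w] IH less.prems n by simp
    finally show ?thesis
      by (simp add: n B_def algebra_simps)
  qed
qed

definition list_pair_sum :: "('a \<Rightarrow> 'a \<Rightarrow> 'b::comm_semiring_1) \<Rightarrow> 'a list \<Rightarrow> 'b" where
  "list_pair_sum w xs = perm_pair_sum (\<lambda>p q. w (xs ! p) (xs ! q)) {..<length xs}"

lemma list_pair_sum_mset_eq: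
  assumes "mset xs = mset ys"
  shows "list_pair_sum w xs = list_pair_sum w ys"
proof -
  obtain f where f: "bij_betw f {..<length xs} {..<length ys}" "\<forall>i<length xs. xs ! i = ys ! f i"
    using permutation_Ex_bij[OF assms] by blast
  have "list_pair_sum w ys = perm_pair_sum (\<lambda>p q. w (ys ! p) (ys ! q)) (f ` {..<length xs})"
    using f(1) by (simp add: list_pair_sum_def bij_betw_def)
  also have "\<dots> = perm_pair_sum (\<lambda>p q. w (ys ! f p) (ys ! f q)) {..<length xs}"
    using f(1) by (intro perm_pair_sum_reindex) (simp add: bij_betw_def)
  also have "\<dots> = list_pair_sum w xs"
    unfolding list_pair_sum_def using f(2) by (intro perm_pair_sum_cong) simp
  finally show ?thesis ..
qed

lemma nth_take_drop_Suc:
  assumes "p < length xs" "i < length xs - 1"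
  shows "(take p xs @ drop (Suc p) xs) ! i = xs ! (if i < p then i else Suc i)"
  using assms by (auto simp: nth_append min_def)

lemma list_pair_sum_delete:
  assumes "p < length xs"
  shows "perm_pair_sum (\<lambda>a b. w (xs ! a) (xs ! b)) ({..<length xs} - {p}) =
    list_pair_sum w (take p xs @ drop (Suc p) xs)"
proof -
  define skip where "skip i = (if i < p then i else Suc i)" for i
  have "perm_pair_sum (\<lambda>a b. w (xs ! a) (xs ! b)) ({..<length xs} - {p}) =
      perm_pair_sum (\<lambda>a b. w (xs ! a) (xs ! b)) (skip ` {..<length xs - 1})"
  proof (intro arg_cong[where f = "perm_pair_sum _"] subset_antisym subsetI)
    fix i assume i: "i \<in> {..<length xs} - {p}"
    show "i \<in> skip ` {..<length xs - 1}"
    proof (cases "i < p")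
      case True
      then show ?thesis using assms by (intro image_eqI[of _ _ i]) (auto simp: skip_def)
    next
      case False
      then show ?thesis using i by (intro image_eqI[of _ _ "i - 1"]) (auto simp: skip_def)
    qed
  qed (use assms in \<open>auto simp: skip_def\<close>)
  also have "perm_pair_sum (\<lambda>a b. w (xs ! a) (xs ! b)) (skip ` {..<length xs - 1}) =
      perm_pair_sum (\<lambda>a b. w (xs ! skip a) (xs ! skip b)) {..<length xs - 1}"
    by (rule perm_pair_sum_reindex) (auto simp: skip_def inj_on_def split: if_splits)
  also have "\<dots> = list_pair_sum w (take p xs @ drop (Suc p) xs)"
  proof -
    have len: "length (take p xs @ drop (Suc p) xs) = length xs - 1" using assms by simp
    show ?thesis
      unfolding list_pair_sum_def len using assms
      by (intro perm_pair_sum_cong) (simp_all add: skip_def nth_take_drop_Suc)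
  qed
  finally show ?thesis .
qed

lemma list_pair_sum_snoc:
  fixes w :: "'a \<Rightarrow> 'a \<Rightarrow> 'b::comm_semiring_1"
  assumes sym: "\<And>a b. w a b = w b a"
  shows "list_pair_sum w (xs @ [y]) = of_nat (length xs + 1) *
    (\<Sum>p<length xs. w (xs ! p) y * list_pair_sum w (take p xs @ drop (Suc p) xs))"
proof -
  define n where "n = length xs"
  define v where "v = (\<lambda>p q. w ((xs @ [y]) ! p) ((xs @ [y]) ! q))"
  have "list_pair_sum w (xs @ [y]) = perm_pair_sum v {..<Suc n}"
    by (simp add: list_pair_sum_def v_def n_def)
  also have "\<dots> = of_nat (Suc n) * (\<Sum>p\<in>{..<n}. v p n * perm_pair_sum v ({..<n} - {p}))"
  proof -
    have "{..<Suc n} - {p} - {n} = {..<n} - {p}" for p by auto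
    then show ?thesis
      using perm_pair_sum_expand_at[of v "{..<Suc n}" n] sym by (simp add: v_def lessThan_Suc)
  qed
  also have "(\<Sum>p\<in>{..<n}. v p n * perm_pair_sum v ({..<n} - {p})) =
      (\<Sum>p<n. w (xs ! p) y * list_pair_sum w (take p xs @ drop (Suc p) xs))"
  proof (intro sum.cong refl)
    fix p assume "p \<in> {..<n}"
    then have "perm_pair_sum v ({..<n} - {p}) = perm_pair_sum (\<lambda>a b. w (xs ! a) (xs ! b)) ({..<n} - {p})"
      by (intro perm_pair_sum_cong) (simp add: v_def n_def nth_append)
    then show "v p n * perm_pair_sum v ({..<n} - {p}) =
        w (xs ! p) y * list_pair_sum w (take p xs @ drop (Suc p) xs)"
      using \<open>p \<in> {..<n}\<close> by (simp add: v_def n_def nth_append list_pair_sum_delete)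
  qed
  finally show ?thesis by (simp add: n_def)
qed

definition stutter :: "'a list \<Rightarrow> 'a list" where
  "stutter xs = concat (map (\<lambda>x. [x, x]) xs)"

lemma stutter_simps [simp]:
  "stutter [] = []" "stutter (x # xs) = x # x # stutter xs" "stutter (xs @ ys) = stutter xs @ stutter ys"
  by (simp_all add: stutter_def)

lemma length_stutter [simp]: "length (stutter xs) = 2 * length xs"
  by (induction xs) auto

lemma stutter_snoc_delete:
  fixes i :: 'a and xs :: "'a list"
  assumes t: "t < length xs" and r: "r < 2"
  defines "l \<equiv> stutter xs @ [i]"
  shows "l ! (2 * t + r) = xs ! t"
    and "mset (take (2 * t + r) l @ drop (Suc (2 * t + r)) l) =
         mset (stutter (take t xs @ drop (Suc t) xs) @ [i, xs ! t])"
proof -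
  define u v where "u = stutter (take t xs)" and "v = stutter (drop (Suc t) xs)"
  have "xs = take t xs @ xs ! t # drop (Suc t) xs" using t by (simp add: id_take_nth_drop)
  then have l: "l = u @ xs ! t # xs ! t # v @ [i]"
    unfolding l_def u_def v_def by (metis append.assoc append_Cons append_Nil stutter_simps(2,3))
  have "length u = 2 * t" using t by (simp add: u_def min_def)
  moreover have "r = 0 \<or> r = 1" using r by auto
  ultimately show "l ! (2 * t + r) = xs ! t"
    and "mset (take (2 * t + r) l @ drop (Suc (2 * t + r)) l) =
         mset (stutter (take t xs @ drop (Suc t) xs) @ [i, xs ! t])"
    unfolding l by (auto simp: nth_append u_def[symmetric] v_def[symmetric])
qed

lemma list_pair_sum_stutter_append:
  fixes w :: "'a \<Rightarrow> 'a \<Rightarrow> 'b::comm_semiring_1"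
  assumes sym: "\<And>a b. w a b = w b a"
  shows "list_pair_sum w (stutter xs @ [i, j]) = of_nat (2 * length xs + 2) *
    (w i j * list_pair_sum w (stutter xs) +
     2 * (\<Sum>t<length xs. w (xs ! t) j * list_pair_sum w (stutter (take t xs @ drop (Suc t) xs) @ [i, xs ! t])))"
proof -
  define l where "l = stutter xs @ [i]"
  have "list_pair_sum w (stutter xs @ [i, j]) = list_pair_sum w (l @ [j])"
    by (simp add: l_def)
  also have "\<dots> = of_nat (2 * length xs + 2) *
      ((\<Sum>p<2 * length xs. w (l ! p) j * list_pair_sum w (take p l @ drop (Suc p) l)) +
       w i j * list_pair_sum w (stutter xs))"
    using list_pair_sum_snoc[of w l j] sym by (simp add: l_def nth_append)
  also have "(\<Sum>p<2 * length xs. w (l ! p) j * list_pair_sum w (take p l @ drop (Suc p) l)) =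
      (\<Sum>t<length xs. 2 * (w (xs ! t) j * list_pair_sum w (stutter (take t xs @ drop (Suc t) xs) @ [i, xs ! t])))"
    unfolding sum_lessThan_even_odd
  proof (intro sum.cong refl)
    fix t assume "t \<in> {..<length xs}"
    then have "t < length xs" by simp
    have pair: "w (l ! (2 * t + r)) j * list_pair_sum w (take (2 * t + r) l @ drop (Suc (2 * t + r)) l) =
        w (xs ! t) j * list_pair_sum w (stutter (take t xs @ drop (Suc t) xs) @ [i, xs ! t])"
      if "r < 2" for r
    proof -
      note delete = stutter_snoc_delete[OF \<open>t < length xs\<close> that, of i]
      show ?thesis unfolding l_def delete(1) list_pair_sum_mset_eq[OF delete(2)] ..
    qed
    show "w (l ! (2 * t)) j * list_pair_sum w (take (2 * t) l @ drop (Suc (2 * t)) l) +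
          w (l ! (2 * t + 1)) j * list_pair_sum w (take (2 * t + 1) l @ drop (Suc (2 * t + 1)) l) =
          2 * (w (xs ! t) j * list_pair_sum w (stutter (take t xs @ drop (Suc t) xs) @ [i, xs ! t]))"
      using pair[of 0] pair[of 1] by (simp add: mult_2)
  qed
  finally show ?thesis
    by (simp add: sum_distrib_left algebra_simps)
qed

definition closed_stutter_sum :: "('a::finite \<Rightarrow> 'a \<Rightarrow> 'b::comm_semiring_1) \<Rightarrow> nat \<Rightarrow> 'b" where
  "closed_stutter_sum w m = (\<Sum>xs\<in>{xs. length xs = m}. list_pair_sum w (stutter xs))"

definition open_stutter_sum :: "('a::finite \<Rightarrow> 'a \<Rightarrow> 'b::comm_semiring_1) \<Rightarrow> nat \<Rightarrow> 'a \<Rightarrow> 'a \<Rightarrow> 'b" where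
  "open_stutter_sum w m i j = (\<Sum>xs\<in>{xs. length xs = m}. list_pair_sum w (stutter xs @ [i, j]))"

lemma open_stutter_sum_rec:
  fixes w :: "'a::finite \<Rightarrow> 'a \<Rightarrow> 'b::comm_semiring_1"
  assumes sym: "\<And>a b. w a b = w b a"
  shows "open_stutter_sum w m i j = of_nat (2 * m + 2) *
    (w i j * closed_stutter_sum w m + 2 * of_nat m * (\<Sum>x\<in>UNIV. w x j * open_stutter_sum w (m - 1) i x))"
proof -
  define f where "f x ys = w x j * list_pair_sum w (stutter ys @ [i, x])" for x ys
  have "open_stutter_sum w m i j = (\<Sum>xs\<in>{xs. length xs = m}. of_nat (2 * m + 2) *
      (w i j * list_pair_sum w (stutter xs) + 2 * (\<Sum>t<m. f (xs ! t) (take t xs @ drop (Suc t) xs))))"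
    unfolding open_stutter_sum_def f_def by (intro sum.cong refl) (simp add: list_pair_sum_stutter_append sym)
  also have "\<dots> = of_nat (2 * m + 2) * (w i j * closed_stutter_sum w m +
      2 * (\<Sum>xs\<in>{xs. length xs = m}. \<Sum>t<m. f (xs ! t) (take t xs @ drop (Suc t) xs)))"
    unfolding closed_stutter_sum_def by (simp only: sum_distrib_left[symmetric] sum.distrib)
  also have "(\<Sum>xs\<in>{xs. length xs = m}. \<Sum>t<m. f (xs ! t) (take t xs @ drop (Suc t) xs)) =
      (\<Sum>t<m. \<Sum>xs\<in>{xs. length xs = m}. f (xs ! t) (take t xs @ drop (Suc t) xs))"
    by (rule sum.swap)
  also have "(\<Sum>t<m. \<Sum>xs\<in>{xs. length xs = m}. f (xs ! t) (take t xs @ drop (Suc t) xs)) =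
      (\<Sum>t<m. \<Sum>x\<in>UNIV. \<Sum>ys\<in>{ys. length ys = m - 1}. f x ys)"
    by (intro sum.cong refl sum_lists_remove_nth) simp
  also have "\<dots> = of_nat m * (\<Sum>x\<in>UNIV. w x j * open_stutter_sum w (m - 1) i x)"
    by (simp add: open_stutter_sum_def f_def sum_distrib_left)
  finally show ?thesis
    by (simp add: mult.assoc)
qed

lemma mat_tpow_Suc_Cons: "mat_tpow A (Suc m) (a # b # r) = A $ a $ b * mat_tpow A m r"
  unfolding mat_tpow_def by (subst prod.lessThan_Suc_shift) simp

lemma mat_tpow_eq_pair_prod: "length l = 2 * k \<Longrightarrow> mat_tpow A k l = pair_prod (\<lambda>a b. A $ a $ b) l"
proof (induction k arbitrary: l)
  case 0
  then show ?case by (simp add: mat_tpow_def)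
next
  case (Suc k)
  then obtain a b r where "l = a # b # r" and "length r = 2 * k"
    by (cases l; cases "tl l") auto
  then show ?case using Suc.IH by (simp add: mat_tpow_Suc_Cons)
qed

lemma sym_tpow_eq_list_pair_sum:
  assumes "length l = 2 * k"
  shows "sym_tpow A k l = list_pair_sum (\<lambda>a b. A $ a $ b) l / fact (2 * k)"
proof -
  have "(\<Sum>\<pi>\<in>{\<pi>. \<pi> permutes {..<2 * k}}. mat_tpow A k (map (\<lambda>j. l ! \<pi> j) [0..<2 * k])) =
        (\<Sum>\<pi>\<in>{\<pi>. \<pi> permutes {..<2 * k}}. pair_prod (\<lambda>p q. A $ (l ! p) $ (l ! q)) (map \<pi> [0..<2 * k]))"
    by (intro sum.cong refl) (simp add: mat_tpow_eq_pair_prod pair_prod_map flip: map_map)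
  also have "\<dots> = list_pair_sum (\<lambda>a b. A $ a $ b) l"
    unfolding list_pair_sum_def perm_pair_sum_def assms
    by (rule sum_permutes_eq_sum_permutations_of_set)
  finally show ?thesis
    by (simp add: sym_tpow_def Sym_def)
qed

lemma sum_contract_identity_tpow:
  "(\<Sum>js\<in>{js :: 'n::finite list. length js = 2 * m}. g js * mat_tpow (mat 1 :: real^'n^'n) m js) =
   (\<Sum>xs\<in>{xs. length xs = m}. g (stutter xs))"
proof (induction m arbitrary: g)
  case 0
  have "{js :: 'n list. length js = 0} = {[]}" by auto
  then show ?case by (simp add: mat_tpow_def)
next
  case (Suc m)
  have "(\<Sum>js\<in>{js :: 'n list. length js = 2 * Suc m}. g js * mat_tpow (mat 1 :: real^'n^'n) (Suc m) js) =
        (\<Sum>x\<in>UNIV. \<Sum>y\<in>UNIV. \<Sum>js\<in>{js. length js = 2 * m}.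
           g (x # y # js) * ((mat 1 :: real^'n^'n) $ x $ y * mat_tpow (mat 1 :: real^'n^'n) m js))"
    by (simp add: sum_lists_length_Suc mat_tpow_Suc_Cons)
  also have "\<dots> = (\<Sum>x\<in>UNIV. \<Sum>y\<in>UNIV. if x = y then
      (\<Sum>js\<in>{js. length js = 2 * m}. g (x # x # js) * mat_tpow (mat 1 :: real^'n^'n) m js) else 0)"
    by (intro sum.cong refl) (simp add: mat_def)
  also have "\<dots> = (\<Sum>x\<in>UNIV. \<Sum>js\<in>{js. length js = 2 * m}. g (x # x # js) * mat_tpow (mat 1 :: real^'n^'n) m js)"
    by simp
  also have "\<dots> = (\<Sum>xs\<in>{xs. length xs = Suc m}. g (stutter xs))"
    by (simp add: Suc.IH sum_lists_length_Suc)
  finally show ?case .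
qed

lemma contract_sym_tpow_open:
  "contract (2 * m) (sym_tpow A (Suc m)) (mat_tpow (mat 1) m) [i, j] =
   open_stutter_sum (\<lambda>a b. A $ a $ b) m i j / fact (2 * m + 2)"
proof -
  have "contract (2 * m) (sym_tpow A (Suc m)) (mat_tpow (mat 1) m) [i, j] =
      (\<Sum>xs\<in>{xs. length xs = m}. sym_tpow A (Suc m) (stutter xs @ [i, j]))"
    unfolding contract_def by (rule sum_contract_identity_tpow)
  also have "\<dots> = open_stutter_sum (\<lambda>a b. A $ a $ b) m i j / fact (2 * m + 2)"
    by (simp add: open_stutter_sum_def sym_tpow_eq_list_pair_sum sum_divide_distrib)
  finally show ?thesis .
qed

lemma contract_sym_tpow_closed:
  "contract (2 * m) (sym_tpow A m) (mat_tpow (mat 1) m) [] =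
   closed_stutter_sum (\<lambda>a b. A $ a $ b) m / fact (2 * m)"
proof -
  have "contract (2 * m) (sym_tpow A m) (mat_tpow (mat 1) m) [] =
      (\<Sum>xs\<in>{xs. length xs = m}. sym_tpow A m (stutter xs))"
    unfolding contract_def using sum_contract_identity_tpow[of "sym_tpow A m" m] by simp
  also have "\<dots> = closed_stutter_sum (\<lambda>a b. A $ a $ b) m / fact (2 * m)"
    by (simp add: closed_stutter_sum_def sym_tpow_eq_list_pair_sum sum_divide_distrib)
  finally show ?thesis .
qed

definition sym_contraction_mat :: "real^'n^'n \<Rightarrow> nat \<Rightarrow> real^'n^'n" where
  "sym_contraction_mat A m = (\<chi> i j. contract (2 * m) (sym_tpow A (Suc m)) (mat_tpow (mat 1) m) [i, j])"

definition sym_contraction :: "real^'n^'n \<Rightarrow> nat \<Rightarrow> real" where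
  "sym_contraction A m = contract (2 * m) (sym_tpow A m) (mat_tpow (mat 1) m) []"

lemma sym_contraction_mat_rec:
  fixes A :: "real^'n^'n"
  assumes "transpose A = A"
  shows "sym_contraction_mat A m = (1 / (2 * real m + 1)) *\<^sub>R
    (sym_contraction A m *\<^sub>R A + (2 * real m) *\<^sub>R (sym_contraction_mat A (m - 1) ** A))"
proof -
  have sym: "A $ a $ b = A $ b $ a" for a b
    using arg_cong[where f = "\<lambda>M. M $ a $ b", OF assms] by (simp add: transpose_def)
  have fact: "(fact (2 * m + 2) :: real) = (2 * real m + 2) * (2 * real m + 1) * fact (2 * m)"
    by (simp add: algebra_simps)
  have "2 * real m + 1 \<noteq> 0" "2 * real m + 2 \<noteq> 0" by linarith+
  have tail: "real m * (\<Sum>x\<in>UNIV. A $ x $ j * open_stutter_sum (\<lambda>a b. A $ a $ b) (m - 1) i x) / fact (2 * m) =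
      real m * (sym_contraction_mat A (m - 1) ** A) $ i $ j" for i j
  proof (cases m)
    case (Suc k)
    then show ?thesis
      unfolding sym_contraction_mat_def matrix_matrix_mult_def contract_sym_tpow_open
      by (simp add: sum_divide_distrib[symmetric] mult.commute)
  qed simp
  have "sym_contraction_mat A m $ i $ j =
      (1 / (2 * real m + 1)) * (sym_contraction A m * A $ i $ j + 2 * real m * (sym_contraction_mat A (m - 1) ** A) $ i $ j)"
    for i j
  proof -
    have "sym_contraction_mat A m $ i $ j = open_stutter_sum (\<lambda>a b. A $ a $ b) m i j / fact (2 * m + 2)"
      by (simp add: sym_contraction_mat_def contract_sym_tpow_open)
    also have "\<dots> = (A $ i $ j * closed_stutter_sum (\<lambda>a b. A $ a $ b) m +
        2 * real m * (\<Sum>x\<in>UNIV. A $ x $ j * open_stutter_sum (\<lambda>a b. A $ a $ b) (m - 1) i x)) /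
        ((2 * real m + 1) * fact (2 * m))"
      using \<open>2 * real m + 2 \<noteq> 0\<close> unfolding fact
      by (subst open_stutter_sum_rec) (simp_all add: sym add.commute)
    also have "\<dots> = (1 / (2 * real m + 1)) * (A $ i $ j * (closed_stutter_sum (\<lambda>a b. A $ a $ b) m / fact (2 * m)) +
        2 * (real m * (\<Sum>x\<in>UNIV. A $ x $ j * open_stutter_sum (\<lambda>a b. A $ a $ b) (m - 1) i x) / fact (2 * m)))"
      using \<open>2 * real m + 1 \<noteq> 0\<close> \<open>2 * real m + 2 \<noteq> 0\<close> by (simp add: field_simps)
    finally show ?thesis
      unfolding tail sym_contraction_def contract_sym_tpow_closed by (simp add: ac_simps)
  qed
  then show ?thesis
    by (simp add: vec_eq_iff)
qed

lemma dfact_pos: "dfact n > 0"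
  unfolding dfact_def by (auto intro!: prod_pos)

lemma dfact_rec:
  assumes "n \<ge> 1"
  shows "dfact n = of_int n * dfact (n - 2)"
proof -
  have "nat ((n + 1) div 2) = Suc (nat ((n - 1) div 2))" using assms by simp
  then have "dfact n = (\<Prod>i<Suc (nat ((n - 1) div 2)). of_int (n - 2 * int i))"
    using assms by (simp add: dfact_def atLeast0LessThan)
  also have "\<dots> = of_int n * (\<Prod>i<nat ((n - 1) div 2). of_int (n - 2 - 2 * int i))"
    by (subst prod.lessThan_Suc_shift) (simp add: algebra_simps)
  also have "(\<Prod>i<nat ((n - 1) div 2). of_int (n - 2 - 2 * int i)) = dfact (n - 2)"
  proof (cases "n - 2 \<le> 0")
    case True
    then have "nat ((n - 1) div 2) = 0" using assms by (cases "n = 1") auto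
    then show ?thesis using True by (simp add: dfact_def)
  next
    case False
    then show ?thesis by (simp add: dfact_def atLeast0LessThan)
  qed
  finally show ?thesis .
qed

lemma dcoef_Suc_1: "dcoef (Suc m) 1 = 1 / (2 * real m + 1)"
proof -
  have args: "2 * int (Suc m) - 2 * int 1 - 1 = 2 * int m - 1" "2 * int (Suc m) - 1 = 2 * int m + 1"
    by simp_all
  have rec: "dfact (2 * int m + 1) = (2 * real m + 1) * dfact (2 * int m - 1)"
    using dfact_rec[of "2 * int m + 1"] by simp
  have "dcoef (Suc m) 1 = dfact (2 * int m - 1) * fact m / (dfact (2 * int m + 1) * fact m)"
    unfolding dcoef_def args by simp
  also have "\<dots> = 1 / (2 * real m + 1)"
    unfolding rec using dfact_pos[of "2 * int m - 1"] by simp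
  finally show ?thesis .
qed

lemma dcoef_Suc_Suc:
  assumes "s \<ge> 1"
  shows "dcoef (Suc (Suc m)) (Suc s) = (2 * real m + 2) / (2 * real m + 3) * dcoef (Suc m) s"
proof -
  have "dfact (2 * int m + 3) = (2 * real m + 3) * dfact (2 * int m + 1)"
    using dfact_rec[of "2 * int m + 3"] by (simp add: add.commute)
  moreover have "(2 :: real) ^ (Suc s - 1) = 2 * 2 ^ (s - 1)"
    using assms by (cases s) auto
  moreover have "2 * int (Suc (Suc m)) - 2 * int (Suc s) - 1 = 2 * int (Suc m) - 2 * int s - 1"
    by simp
  ultimately show ?thesis
    using dfact_pos[of "2 * int m + 1"] by (simp add: dcoef_def field_simps)
qed

lemma matpow_Suc_right: "matpow A (Suc n) = matpow A n ** A"
  by (induction n) (simp_all add: matrix_mul_assoc)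

lemma matpow_1: "matpow A (Suc 0) = A"
  by simp

lemma matrix_mul_sum_left:
  fixes f :: "'i \<Rightarrow> 'a::semiring_1^'n^'m"
  shows "(\<Sum>s\<in>S. f s) ** B = (\<Sum>s\<in>S. f s ** B)"
  by (induction S rule: infinite_finite_induct)
     (simp_all add: vec_eq_iff matrix_matrix_mult_def sum_component distrib_right sum.distrib)

lemma sym_contraction_mat_eq_sum:
  fixes A :: "real^'n^'n"
  assumes sym: "transpose A = A"
  shows "sym_contraction_mat A m =
    (\<Sum>s=1..Suc m. (dcoef (Suc m) s * sym_contraction A (Suc m - s)) *\<^sub>R matpow A s)"
proof (induction m)
  case 0
  show ?case
    using sym_contraction_mat_rec[OF sym, of 0] dcoef_Suc_1[of 0] by simp
next
  case (Suc m)
  define c where "c s = dcoef (Suc m) s * sym_contraction A (Suc m - s)" for s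
  have "sym_contraction_mat A m ** A = (\<Sum>s=1..Suc m. c s *\<^sub>R matpow A (Suc s))"
    unfolding Suc.IH matrix_mul_sum_left
    by (simp add: c_def matpow_Suc_right scalar_matrix_assoc[symmetric] del: matpow.simps)
  then have "sym_contraction_mat A (Suc m) = (1 / (2 * real m + 3)) *\<^sub>R
      (sym_contraction A (Suc m) *\<^sub>R A + (2 * real m + 2) *\<^sub>R (\<Sum>s=1..Suc m. c s *\<^sub>R matpow A (Suc s)))"
    using sym_contraction_mat_rec[OF sym, of "Suc m"] by (simp add: algebra_simps)
  also have "\<dots> = ((1 / (2 * real m + 3)) * sym_contraction A (Suc m)) *\<^sub>R A +
      (\<Sum>s=1..Suc m. ((2 * real m + 2) / (2 * real m + 3) * c s) *\<^sub>R matpow A (Suc s))"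
    by (simp add: scaleR_add_right scaleR_sum_right del: matpow.simps)
  also have "\<dots> = (dcoef (Suc (Suc m)) 1 * sym_contraction A (Suc m)) *\<^sub>R matpow A 1 +
      (\<Sum>s=1..Suc m. (dcoef (Suc (Suc m)) (Suc s) * sym_contraction A (Suc m - s)) *\<^sub>R matpow A (Suc s))"
    using dcoef_Suc_1[of "Suc m"]
    by (intro arg_cong2[where f = "(+)"] sum.cong refl)
       (simp_all add: dcoef_Suc_Suc c_def add.commute matpow_1 del: matpow.simps)
  also have "\<dots> = (\<Sum>s=1..Suc (Suc m). (dcoef (Suc (Suc m)) s * sym_contraction A (Suc (Suc m) - s)) *\<^sub>R matpow A s)"
    by (simp add: sum.atLeast_Suc_atMost sum.shift_bounds_cl_Suc_ivl del: sum.cl_ivl_Suc matpow.simps)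
  finally show ?case .
qed

theorem lemma29:
  fixes A :: "real^'n^'n" and k :: nat
  assumes "transpose A = A" and "trace A = 0" and "k \<ge> 1"
  shows "(\<chi> i j. contract (2*(k-1)) (sym_tpow A k) (mat_tpow (mat 1) (k-1)) [i, j])
       = (\<Sum>s=1..k. (dcoef k s * contract (2*(k-s)) (sym_tpow A (k-s)) (mat_tpow (mat 1) (k-s)) [])
                       *\<^sub>R matpow A s)"
proof -
  obtain m where k: "k = Suc m" using assms(3) by (cases k) auto
  have "(\<chi> i j. contract (2*(k-1)) (sym_tpow A k) (mat_tpow (mat 1) (k-1)) [i, j]) = sym_contraction_mat A m"
    by (simp add: k sym_contraction_mat_def)
  also have "\<dots> = (\<Sum>s=1..k. (dcoef k s * sym_contraction A (k - s)) *\<^sub>R matpow A s)"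
    unfolding k by (rule sym_contraction_mat_eq_sum[OF assms(1)])
  finally show ?thesis
    by (simp add: sym_contraction_def)
qed

end
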